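(* Let $f_1,\dots,f_r\in\mathbb{R}[x]$ and $g_1,\dots,g_t\in\mathbb{R}[y]$ be real polynomials in $x\in\mathbb{R}^n$ and $y\in\mathbb{R}^m$, let $A\in\mathbb{R}^{m\times n}$, and set $h_j(x):=g_j(Ax)$. Let $C=\{x\in\mathbb{R}^n: f_i(x)\ge 0,\ i=1,\dots,r\}$, $H=\{x\in\mathbb{R}^n: h_j(x)\ge 0,\ j=1,\dots,t\}$, $d:=\max_{i,j}\{\lceil \deg(f_i)/2\rceil,\lceil\deg(h_j)/2\rceil\}$, and for $k\ge d$ $$S_k:=\Big\{x\in\mathbb{R}^n:\ \exists\, y\in\mathbb{R}^{\mathbb{N}^n_{2k}} \text{ with } y_0=1,\ x=(y_{e_1},\dots,y_{e_n}),\ L^{(k)}_{f_i}[y]\succeq 0\ (i=0,1,\dots,r),\ L^{(k)}_{h_j}[y]\succeq 0\ (j=1,\dots,t)\Big\},$$ where $f_0:=1$. Assume that all the polynomials $f_1,\dots,f_r,h_1,\dots,h_t$ (as polynomials in $x$) are sos-concave. Then $S_k=C\cap H$ for all $k\ge d$.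
   Context: $\mathbb{N}^n_{k}=\{\alpha\in\mathbb{N}^n: |\alpha|\le k\}$, and $\mathbb{R}^{\mathbb{N}^n_{2k}}$ is the space of real vectors $y=(y_\alpha)_{\alpha\in\mathbb{N}^n_{2k}}$. $[x]_s$ is the column vector of all monomials $x^\alpha$ with $|\alpha|\le s$. $e_i$ is the $i$-th unit vector and $0$ the zero multi-index. Localizing matrix: for a polynomial $f$ with $\deg f\le 2k$, let $s=k-\lceil\deg(f)/2\rceil$ and expand $f(x)[x]_s[x]_s^T=\sum_{\alpha\in\mathbb{N}^n_{2k}}x^\alpha F_\alpha$ with symmetric matrices $F_\alpha$; then $L^{(k)}_f[y]:=\sum_\alpha y_\alpha F_\alpha$. A polynomial $f\in\mathbb{R}[x]$ is sos-convex if there is a matrix polynomial $P(x)\in\mathbb{R}[x]^{\ell\times n}$ (some $\ell$) with $\nabla^2 f(x)=P(x)^TP(x)$; $f$ is sos-concave if $-f$ is sos-convex. No assumption is made that $C$ or $H$ has nonempty interior. *)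

theory Defs
  imports "HOL-Analysis.Analysis" "HOL-Library.Poly_Mapping"
begin

text \<open>Variables are indexed by natural numbers; a polynomial in
 x in R^n uses only the variables 0,...,n-1.  Points of R^n are functions
 nat => real vanishing outside {..<n}.\<close>

type_synonym mon = "nat \<Rightarrow>\<^sub>0 nat"
type_synonym mpoly = "mon \<Rightarrow>\<^sub>0 real"

definition mdeg :: "mon \<Rightarrow> nat" where
  "mdeg \<alpha> = (\<Sum>i\<in>Poly_Mapping.keys \<alpha>. Poly_Mapping.lookup \<alpha> i)"

definition pdeg :: "mpoly \<Rightarrow> nat" where
  "pdeg p = Max (insert 0 (mdeg ` Poly_Mapping.keys p))"

definition vars_in :: "nat \<Rightarrow> mpoly \<Rightarrow> bool" where
  "vars_in n p \<longleftrightarrow> (\<forall>\<alpha>\<in>Poly_Mapping.keys p. Poly_Mapping.keys \<alpha> \<subseteq> {..<n})"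

definition peval :: "mpoly \<Rightarrow> (nat \<Rightarrow> real) \<Rightarrow> real" where
  "peval p x = (\<Sum>\<alpha>\<in>Poly_Mapping.keys p. Poly_Mapping.lookup p \<alpha> * (\<Prod>i\<in>Poly_Mapping.keys \<alpha>. x i ^ Poly_Mapping.lookup \<alpha> i))"

definition Rn :: "nat \<Rightarrow> (nat \<Rightarrow> real) set" where
  "Rn n = {x. \<forall>i\<ge>n. x i = 0}"

definition Var :: "nat \<Rightarrow> mpoly" where
  "Var k = Poly_Mapping.single (Poly_Mapping.single k 1) 1"

definition Const :: "real \<Rightarrow> mpoly" where
  "Const c = Poly_Mapping.single 0 c"

text \<open>Substitution y := A x, where A is m x n (entries A i k, i<m, k<n).\<close>
definition lin_subst :: "nat \<Rightarrow> (nat \<Rightarrow> nat \<Rightarrow> real) \<Rightarrow> mpoly \<Rightarrow> mpoly" where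
  "lin_subst n A g = (\<Sum>\<alpha>\<in>Poly_Mapping.keys g. Const (Poly_Mapping.lookup g \<alpha>) *
      (\<Prod>i\<in>Poly_Mapping.keys \<alpha>. (\<Sum>k<n. Const (A i k) * Var k) ^ Poly_Mapping.lookup \<alpha> i))"

definition pd :: "nat \<Rightarrow> mpoly \<Rightarrow> mpoly" where
  "pd i p = (\<Sum>\<alpha>\<in>Poly_Mapping.keys p. Poly_Mapping.single (\<alpha> - Poly_Mapping.single i 1)
                (Poly_Mapping.lookup p \<alpha> * of_nat (Poly_Mapping.lookup \<alpha> i)))"

text \<open>sos-convex: Hessian = P^T P for some l x n matrix polynomial P in R[x].\<close>
definition sos_convex :: "nat \<Rightarrow> mpoly \<Rightarrow> bool" where
  "sos_convex n f \<longleftrightarrow> (\<exists>(l::nat) (P :: nat \<Rightarrow> nat \<Rightarrow> mpoly).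
      (\<forall>a<l. \<forall>b<n. vars_in n (P a b)) \<and>
      (\<forall>i<n. \<forall>j<n. pd i (pd j f) = (\<Sum>a<l. P a i * P a j)))"

definition sos_concave :: "nat \<Rightarrow> mpoly \<Rightarrow> bool" where
  "sos_concave n f \<longleftrightarrow> sos_convex n (- f)"

definition Nk :: "nat \<Rightarrow> nat \<Rightarrow> mon set" where
  "Nk n k = {\<alpha>. Poly_Mapping.keys \<alpha> \<subseteq> {..<n} \<and> mdeg \<alpha> \<le> k}"

text \<open>Entry (beta,gamma) of L_f^(k)[y]: sum over alpha of y_alpha (F_alpha)_(beta,gamma),
 where f x^beta x^gamma = sum_delta f_delta x^(delta+beta+gamma).\<close>
definition loc_entry :: "mpoly \<Rightarrow> (mon \<Rightarrow> real) \<Rightarrow> mon \<Rightarrow> mon \<Rightarrow> real" where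
  "loc_entry f y \<beta> \<gamma> = (\<Sum>\<delta>\<in>Poly_Mapping.keys f. Poly_Mapping.lookup f \<delta> * y (\<delta> + \<beta> + \<gamma>))"

text \<open>L_f^(k)[y] is positive semidefinite; rows/columns indexed by N^n_s,
 s = k - ceil(deg f / 2).\<close>
definition loc_psd :: "nat \<Rightarrow> nat \<Rightarrow> mpoly \<Rightarrow> (mon \<Rightarrow> real) \<Rightarrow> bool" where
  "loc_psd n k f y \<longleftrightarrow> (let s = k - (pdeg f + 1) div 2 in
      \<forall>v :: mon \<Rightarrow> real. 0 \<le> (\<Sum>\<beta>\<in>Nk n s. \<Sum>\<gamma>\<in>Nk n s. v \<beta> * v \<gamma> * loc_entry f y \<beta> \<gamma>))"

end

theory Submission
  imports Defs
begin

text \<open>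
  The inclusion \<open>C \<inter> H \<subseteq> S\<^sub>k\<close> is witnessed by the moment vector \<open>y\<^sub>\<alpha> = x\<^sup>\<alpha>\<close> of the Dirac
  measure at \<open>x\<close>, whose localizing matrices are \<open>f(x) v v\<^sup>T\<close>.

  For the converse, let \<open>L\<^sub>y\<close> be the Riesz functional of \<open>y\<close>.  Its \<open>(0,0)\<close> localizing entry gives
  \<open>L\<^sub>y(f) \<ge> 0\<close>, and Jensen's inequality for sos-convex polynomials, \<open>g(x) \<le> L\<^sub>y(g)\<close> with
  \<open>x = (L\<^sub>y(x\<^sub>1), \<dots>, L\<^sub>y(x\<^sub>n))\<close>, applied to \<open>g = -f\<close> gives \<open>f(x) \<ge> L\<^sub>y(f) \<ge> 0\<close>.
  To prove Jensen's inequality, translate so that \<open>x = 0\<close>; then \<open>L\<^sub>y\<close> kills the linear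
  part of \<open>g\<close>.  The form \<open>E = \<Sum>\<^sub>i\<^sub>j x\<^sub>i x\<^sub>j \<partial>\<^sub>i\<partial>\<^sub>j g\<close> multiplies the coefficient of \<open>x\<^sup>\<alpha>\<close> by
  \<open>|\<alpha>|(|\<alpha>| - 1)\<close>, and by sos-convexity \<open>E = \<Sum>\<^sub>a w\<^sub>a\<^sup>2\<close> with \<open>w\<^sub>a = \<Sum>\<^sub>i x\<^sub>i P\<^sub>a\<^sub>i\<close> of degree
  at most \<open>k\<close>.  Hence \<open>L\<^sub>y(g) - g(0) = L'(E)\<close>, where \<open>L'\<close> divides the \<open>\<alpha>\<close>-th moment by
  \<open>|\<alpha>|(|\<alpha>| - 1)\<close>, and \<open>L'(w\<^sup>2) = \<integral>\<^sub>0\<^sup>1 (1 - s) L\<^sub>y(w\<^sub>s\<^sup>2) ds \<ge> 0\<close> for \<open>w\<^sub>s(x) = w(s x) / s\<close>,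
  because \<open>1 / ((p + 1)(p + 2)) = \<integral>\<^sub>0\<^sup>1 (1 - s) s\<^sup>p ds\<close>.
\<close>

abbreviation lookup :: "('a \<Rightarrow>\<^sub>0 'b::zero) \<Rightarrow> 'a \<Rightarrow> 'b" where
  "lookup \<equiv> Poly_Mapping.lookup"
abbreviation keys :: "('a \<Rightarrow>\<^sub>0 'b::zero) \<Rightarrow> 'a set" where
  "keys \<equiv> Poly_Mapping.keys"
abbreviation single :: "'a \<Rightarrow> 'b \<Rightarrow> ('a \<Rightarrow>\<^sub>0 'b::zero)" where
  "single \<equiv> Poly_Mapping.single"

lemma keys_add_mon: "keys ((a::mon) + b) = keys a \<union> keys b"
  by (auto simp: in_keys_iff lookup_add)

lemma mdeg_superset: "finite S \<Longrightarrow> keys a \<subseteq> S \<Longrightarrow> mdeg a = (\<Sum>i\<in>S. lookup a i)"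
  unfolding mdeg_def by (rule sum.mono_neutral_left) (auto simp: in_keys_iff)

lemma mdeg_add: "mdeg (a + b) = mdeg a + mdeg b"
proof -
  let ?S = "keys a \<union> keys b"
  have "mdeg (a + b) = (\<Sum>i\<in>?S. lookup (a + b) i)"
    by (rule mdeg_superset) (auto simp: keys_add_mon)
  also have "\<dots> = (\<Sum>i\<in>?S. lookup a i) + (\<Sum>i\<in>?S. lookup b i)"
    by (simp add: lookup_add sum.distrib)
  also have "\<dots> = mdeg a + mdeg b"
    using mdeg_superset[of ?S a] mdeg_superset[of ?S b] by auto
  finally show ?thesis .
qed

lemma mdeg_zero [simp]: "mdeg 0 = 0"
  by (simp add: mdeg_def)

lemma mdeg_single [simp]: "mdeg (single i k) = k"
  by (cases "k = 0") (simp_all add: mdeg_def)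

lemma mdeg_eq_0_iff: "mdeg a = 0 \<longleftrightarrow> a = 0"
proof
  assume "mdeg a = 0"
  then have "\<forall>i\<in>keys a. lookup a i = 0" by (simp add: mdeg_def)
  then have "\<forall>i. lookup a i = 0" by (auto simp: in_keys_iff)
  then show "a = 0" by (intro poly_mapping_eqI) simp
qed simp

lemma lookup_le_mdeg: "lookup a i \<le> mdeg a"
proof (cases "i \<in> keys a")
  case True then show ?thesis unfolding mdeg_def by (intro member_le_sum) auto
qed (simp add: in_keys_iff)

lemma mon_minus_single_add:
  assumes "i \<in> keys (a::mon)"
  shows "(a - single i 1) + single i 1 = a"
  using assms by (intro poly_mapping_eqI) (auto simp: lookup_add lookup_minus lookup_single when_def in_keys_iff)

lemma mon_minus_single_eq_iff:
  assumes "i \<in> keys (a::mon)"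
  shows "a - single i 1 = b \<longleftrightarrow> a = b + single i 1"
proof
  assume "a - single i 1 = b"
  then show "a = b + single i 1" using mon_minus_single_add[OF assms] by simp
next
  assume "a = b + single i 1"
  then show "a - single i 1 = b" by (intro poly_mapping_eqI) (simp add: lookup_add lookup_minus)
qed

lemma mdeg_minus_single:
  assumes "i \<in> keys (a::mon)"
  shows "mdeg (a - single i 1) + 1 = mdeg a"
  by (metis mon_minus_single_add[OF assms] mdeg_add mdeg_single)

lemma mon_induct [case_names zero add_single]:
  assumes "P 0" "\<And>a i. P a \<Longrightarrow> P (a + single i 1)"
  shows "P (a::mon)"
proof (induction "mdeg a" arbitrary: a)
  case 0 then show ?case using assms(1) by (simp add: mdeg_eq_0_iff)
next
  case (Suc k)
  then have "a \<noteq> 0" by auto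
  then obtain i where i: "i \<in> keys a" by (metis keys_eq_empty ex_in_conv)
  have "P (a - single i 1)" using Suc mdeg_minus_single[OF i] by simp
  then have "P (a - single i 1 + single i 1)" by (rule assms(2))
  then show ?case by (simp only: mon_minus_single_add[OF i])
qed

lemma mdeg_eq_1_iff: "mdeg a = 1 \<longleftrightarrow> (\<exists>i. a = single i 1)"
proof
  assume deg: "mdeg a = 1"
  then have "a \<noteq> 0" by auto
  then obtain i where i: "i \<in> keys a" by (metis keys_eq_empty ex_in_conv)
  then have "a - single i 1 = 0" using deg mdeg_minus_single[OF i] by (simp add: mdeg_eq_0_iff)
  then show "\<exists>i. a = single i 1" using mon_minus_single_add[OF i] by (metis add_0)
qed auto

lemma finite_Nk: "finite (Nk n s)"
proof (rule inj_on_finite)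
  show "inj_on (\<lambda>a. restrict (lookup a) {..<n}) (Nk n s)"
  proof (rule inj_onI)
    fix a b assume a: "a \<in> Nk n s" and b: "b \<in> Nk n s"
      and eq: "restrict (lookup a) {..<n} = restrict (lookup b) {..<n}"
    show "a = b"
    proof (rule poly_mapping_eqI)
      fix i show "lookup a i = lookup b i"
      proof (cases "i < n")
        case True then show ?thesis using fun_cong[OF eq, of i] by simp
      next
        case False
        then have "i \<notin> keys a" "i \<notin> keys b" using a b by (auto simp: Nk_def)
        then show ?thesis by (simp add: in_keys_iff)
      qed
    qed
  qed
  show "(\<lambda>a. restrict (lookup a) {..<n}) ` Nk n s \<subseteq> PiE {..<n} (\<lambda>_. {..s})"
  proof (rule image_subsetI)
    fix a assume "a \<in> Nk n s"
    then show "restrict (lookup a) {..<n} \<in> PiE {..<n} (\<lambda>_. {..s})"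
      using lookup_le_mdeg[of a] by (auto simp: Nk_def restrict_PiE_iff intro: order_trans)
  qed
  show "finite (PiE {..<n} (\<lambda>_. {..s::nat}))" by (rule finite_PiE) auto
qed

lemma lookup_sum_single:
  "finite A \<Longrightarrow> lookup (\<Sum>a\<in>A. single a (f a)) b = (if b \<in> A then f b else 0)"
  by (simp add: lookup_sum lookup_single when_def)

lemma poly_mapping_sum_single:
  assumes "finite A" "keys p \<subseteq> A"
  shows "(\<Sum>a\<in>A. single a (lookup p a)) = p"
  using assms by (intro poly_mapping_eqI) (auto simp: lookup_sum_single in_keys_iff)

lemma mult_eq_sum_single:
  fixes p q :: "'a::monoid_add \<Rightarrow>\<^sub>0 'b::semiring_0"
  assumes "finite A" "keys p \<subseteq> A" "finite B" "keys q \<subseteq> B"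
  shows "p * q = (\<Sum>a\<in>A. \<Sum>b\<in>B. single (a + b) (lookup p a * lookup q b))"
proof -
  have "p * q = (\<Sum>a\<in>A. single a (lookup p a)) * (\<Sum>b\<in>B. single b (lookup q b))"
    using assms by (simp add: poly_mapping_sum_single)
  also have "\<dots> = (\<Sum>a\<in>A. \<Sum>b\<in>B. single (a + b) (lookup p a * lookup q b))"
    by (simp add: sum_product mult_single)
  finally show ?thesis .
qed

lemma lookup_mult_eq_sum:
  assumes "finite A" "keys p \<subseteq> A" "finite B" "keys q \<subseteq> B"
  shows "lookup (p * q) c = (\<Sum>a\<in>A. \<Sum>b\<in>B. if a + b = c then lookup p a * lookup q b else 0)"
  by (simp add: mult_eq_sum_single[OF assms] lookup_sum lookup_single when_def)

lemma Const_add: "Const (a + b) = Const a + Const b"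
  by (simp add: Const_def single_add)

lemma Const_mult: "Const (a * b) = Const a * Const b"
  by (simp add: Const_def mult_single)

lemma Const_0 [simp]: "Const 0 = 0"
  by (simp add: Const_def)

lemma Const_1 [simp]: "Const 1 = 1"
  by (simp add: Const_def)

lemma Const_mult_single: "Const c * single a d = single a (c * d)"
  by (simp add: Const_def mult_single)

lemma sum_Const_mult_single: "(\<Sum>a\<in>keys p. Const (lookup p a) * single a 1) = p"
  by (simp add: Const_mult_single poly_mapping_sum_single)

lemma lookup_Const_mult: "lookup (Const c * p) a = c * lookup p a"
proof -
  have "Const c * p = Const c * (\<Sum>b\<in>keys p. single b (lookup p b))"
    by (simp only: poly_mapping_sum_single finite_keys order_refl)
  also have "\<dots> = (\<Sum>b\<in>keys p. single b (c * lookup p b))"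
    by (simp add: sum_distrib_left Const_mult_single)
  finally have "lookup (Const c * p) a = (if a \<in> keys p then c * lookup p a else 0)"
    by (simp only: lookup_sum_single finite_keys)
  then show ?thesis by (simp add: in_keys_iff)
qed

text \<open>With \<open>h = Const\<close> it is composition of polynomials, with \<open>h = id\<close> it is evaluation.\<close>

definition mon_val :: "(nat \<Rightarrow> 'b::comm_ring_1) \<Rightarrow> mon \<Rightarrow> 'b" where
  "mon_val F a = (\<Prod>i\<in>keys a. F i ^ lookup a i)"

definition psubst :: "(nat \<Rightarrow> 'b::comm_ring_1) \<Rightarrow> (real \<Rightarrow> 'b) \<Rightarrow> mpoly \<Rightarrow> 'b" where
  "psubst F h p = (\<Sum>a\<in>keys p. h (lookup p a) * mon_val F a)"

definition is_ring_hom :: "(real \<Rightarrow> 'b::comm_ring_1) \<Rightarrow> bool" where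
  "is_ring_hom h \<longleftrightarrow>
     (\<forall>a b. h (a + b) = h a + h b) \<and> (\<forall>a b. h (a * b) = h a * h b) \<and> h 0 = 0 \<and> h 1 = 1"

lemma is_ring_hom_Const: "is_ring_hom Const"
  by (simp add: is_ring_hom_def Const_add Const_mult)

lemma is_ring_hom_id: "is_ring_hom (\<lambda>x. x)"
  by (simp add: is_ring_hom_def)

lemma mon_val_superset: "finite S \<Longrightarrow> keys a \<subseteq> S \<Longrightarrow> mon_val F a = (\<Prod>i\<in>S. F i ^ lookup a i)"
  unfolding mon_val_def by (rule prod.mono_neutral_left) (auto simp: in_keys_iff)

lemma mon_val_add: "mon_val F (a + b) = mon_val F a * mon_val F b"
proof -
  let ?S = "keys a \<union> keys b"
  have "mon_val F (a + b) = (\<Prod>i\<in>?S. F i ^ lookup (a + b) i)"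
    by (rule mon_val_superset) (auto simp: keys_add_mon)
  also have "\<dots> = (\<Prod>i\<in>?S. F i ^ lookup a i) * (\<Prod>i\<in>?S. F i ^ lookup b i)"
    by (simp add: lookup_add power_add prod.distrib)
  also have "\<dots> = mon_val F a * mon_val F b"
    using mon_val_superset[of ?S a F] mon_val_superset[of ?S b F] by auto
  finally show ?thesis .
qed

lemma mon_val_zero [simp]: "mon_val F 0 = 1"
  by (simp add: mon_val_def)

lemma mon_val_single [simp]: "mon_val F (single i k) = F i ^ k"
  by (cases "k = 0") (simp_all add: mon_val_def)

lemma mon_val_at_zero: "mon_val (\<lambda>_. 0::real) a = (if a = 0 then 1 else 0)"
proof (cases "a = 0")
  case False
  then obtain i where "i \<in> keys a" by (metis keys_eq_empty ex_in_conv)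
  then show ?thesis unfolding mon_val_def using False
    by (auto intro!: prod_zero bexI[of _ i] simp: in_keys_iff)
qed simp

lemma psubst_superset:
  assumes "finite A" "keys p \<subseteq> A" "h 0 = 0"
  shows "psubst F h p = (\<Sum>a\<in>A. h (lookup p a) * mon_val F a)"
  unfolding psubst_def using assms by (intro sum.mono_neutral_left) (auto simp: in_keys_iff)

lemma psubst_zero [simp]: "psubst F h 0 = 0"
  by (simp add: psubst_def)

context
  fixes h :: "real \<Rightarrow> 'b::comm_ring_1"
  assumes h: "is_ring_hom h"
begin

lemma psubst_add: "psubst F h (p + q) = psubst F h p + psubst F h q"
proof -
  let ?A = "keys p \<union> keys q"
  have h0: "h 0 = 0" using h by (simp add: is_ring_hom_def)
  have "psubst F h (p + q) = (\<Sum>a\<in>?A. h (lookup (p + q) a) * mon_val F a)"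
    using keys_add[of p q] by (intro psubst_superset h0) auto
  also have "\<dots> = (\<Sum>a\<in>?A. h (lookup p a) * mon_val F a) + (\<Sum>a\<in>?A. h (lookup q a) * mon_val F a)"
    using h by (simp add: is_ring_hom_def lookup_add distrib_right sum.distrib)
  also have "\<dots> = psubst F h p + psubst F h q"
    using h0 psubst_superset[of ?A p h F] psubst_superset[of ?A q h F] by auto
  finally show ?thesis .
qed

lemma psubst_sum: "psubst F h (\<Sum>a\<in>A. p a) = (\<Sum>a\<in>A. psubst F h (p a))"
  by (induction A rule: infinite_finite_induct) (simp_all add: psubst_add)

lemma psubst_single: "psubst F h (single a c) = h c * mon_val F a"
  using h by (cases "c = 0") (simp_all add: psubst_def is_ring_hom_def)

lemma psubst_mult: "psubst F h (p * q) = psubst F h p * psubst F h q"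
proof -
  have "psubst F h (p * q) = psubst F h (\<Sum>a\<in>keys p. \<Sum>b\<in>keys q. single (a + b) (lookup p a * lookup q b))"
    by (subst mult_eq_sum_single[of "keys p" p "keys q" q]) auto
  also have "\<dots> = (\<Sum>a\<in>keys p. \<Sum>b\<in>keys q. (h (lookup p a) * mon_val F a) * (h (lookup q b) * mon_val F b))"
    using h by (simp add: psubst_sum psubst_single mon_val_add is_ring_hom_def mult_ac)
  also have "\<dots> = psubst F h p * psubst F h q"
    by (simp add: psubst_def sum_product)
  finally show ?thesis .
qed

lemma psubst_one: "psubst F h 1 = 1"
  using psubst_single[where a=0 and c=1] h by (simp add: is_ring_hom_def)

lemma psubst_power: "psubst F h (p ^ k) = psubst F h p ^ k"
  by (induction k) (simp_all add: psubst_one psubst_mult)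

lemma psubst_prod: "psubst F h (\<Prod>a\<in>A. p a) = (\<Prod>a\<in>A. psubst F h (p a))"
  by (induction A rule: infinite_finite_induct) (simp_all add: psubst_one psubst_mult)

lemma psubst_uminus: "psubst F h (- p) = - psubst F h p"
  using psubst_add[of F p "- p"] by (simp add: add_eq_0_iff)

lemma psubst_Const: "psubst F h (Const c) = h c"
  by (simp add: Const_def psubst_single)

lemma psubst_Var: "psubst F h (Var i) = F i"
  using h by (simp add: Var_def psubst_single is_ring_hom_def)

lemma psubst_psubst: "psubst F h (psubst G Const p) = psubst (\<lambda>i. psubst F h (G i)) h p"
proof -
  have "psubst F h (psubst G Const p) = (\<Sum>a\<in>keys p. h (lookup p a) * psubst F h (mon_val G a))"
    by (simp add: psubst_def[of G Const p] psubst_sum psubst_mult psubst_Const)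
  also have "\<dots> = psubst (\<lambda>i. psubst F h (G i)) h p"
    by (simp add: mon_val_def psubst_prod psubst_power psubst_def[of "\<lambda>i. psubst F h (G i)" h p])
  finally show ?thesis .
qed

end

lemma peval_eq_psubst: "peval p x = psubst x (\<lambda>a. a) p"
  by (simp add: peval_def psubst_def mon_val_def)

lemma peval_uminus: "peval (- p) x = - peval p x"
  by (simp add: peval_eq_psubst psubst_uminus is_ring_hom_id)

lemma peval_one: "peval 1 x = 1"
  by (simp add: peval_eq_psubst psubst_one is_ring_hom_id)

lemma peval_at_zero: "peval p (\<lambda>_. 0) = lookup p 0"
  by (auto simp: peval_eq_psubst psubst_def mon_val_at_zero in_keys_iff if_distrib cong: if_cong)

lemma peval_eq_sum_mon_val: "peval p x = (\<Sum>a\<in>keys p. lookup p a * mon_val x a)"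
  by (simp add: peval_def mon_val_def)

lemma Var_power: "Var i ^ k = single (single i k) 1"
proof (induction k)
  case (Suc k)
  have "Var i ^ Suc k = single (single i 1 + single i k) 1"
    by (simp only: power_Suc Suc) (simp add: Var_def mult_single)
  also have "single i 1 + single i k = single i (Suc k)"
    by (simp add: single_add[symmetric])
  finally show ?case .
qed simp

lemma prod_single_one: "(\<Prod>i\<in>S. single (f i) (1::real)) = single (\<Sum>i\<in>S. f i) 1"
  by (induction S rule: infinite_finite_induct) (simp_all add: mult_single)

lemma mon_val_Var: "mon_val Var a = single a 1"
proof -
  have "mon_val Var a = (\<Prod>i\<in>keys a. single (single i (lookup a i)) (1::real))"
    by (simp add: mon_val_def Var_power)
  also have "\<dots> = single (\<Sum>i\<in>keys a. single i (lookup a i)) 1"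
    by (simp add: prod_single_one)
  also have "(\<Sum>i\<in>keys a. single i (lookup a i)) = a"
    by (rule poly_mapping_sum_single) auto
  finally show ?thesis .
qed

lemma psubst_Var_Const: "psubst Var Const p = p"
  by (simp add: psubst_def mon_val_Var sum_Const_mult_single)

lemma vars_in_add: "vars_in n p \<Longrightarrow> vars_in n q \<Longrightarrow> vars_in n (p + q)"
  unfolding vars_in_def using keys_add[of p q] by blast

lemma vars_in_mult: "vars_in n p \<Longrightarrow> vars_in n q \<Longrightarrow> vars_in n (p * q)"
  unfolding vars_in_def using keys_mult[of p q] by (force simp: keys_add_mon)

lemma vars_in_0 [simp]: "vars_in n 0"
  by (simp add: vars_in_def)

lemma vars_in_1 [simp]: "vars_in n 1"
  by (simp add: vars_in_def)

lemma vars_in_Const [simp]: "vars_in n (Const c)"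
  by (simp add: vars_in_def Const_def)

lemma vars_in_Var: "i < n \<Longrightarrow> vars_in n (Var i)"
  by (simp add: vars_in_def Var_def)

lemma vars_in_uminus [simp]: "vars_in n (- p) = vars_in n p"
  by (simp add: vars_in_def keys_minus)

lemma vars_in_sum: "(\<And>a. a \<in> A \<Longrightarrow> vars_in n (p a)) \<Longrightarrow> vars_in n (\<Sum>a\<in>A. p a)"
  by (induction A rule: infinite_finite_induct) (simp_all add: vars_in_add)

lemma vars_in_prod: "(\<And>a. a \<in> A \<Longrightarrow> vars_in n (p a)) \<Longrightarrow> vars_in n (\<Prod>a\<in>A. p a)"
  by (induction A rule: infinite_finite_induct) (simp_all add: vars_in_mult)

lemma vars_in_power: "vars_in n p \<Longrightarrow> vars_in n (p ^ k)"
  by (induction k) (simp_all add: vars_in_mult)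

lemma vars_in_subset: "vars_in n p \<Longrightarrow> keys q \<subseteq> keys p \<Longrightarrow> vars_in n q"
  unfolding vars_in_def by blast

lemma vars_in_psubst:
  assumes "vars_in N p" "\<And>i. i < N \<Longrightarrow> vars_in n (F i)"
  shows "vars_in n (psubst F Const p)"
  unfolding psubst_def mon_val_def using assms(1)
  by (intro vars_in_sum vars_in_mult vars_in_Const vars_in_prod vars_in_power assms(2))
     (auto simp: vars_in_def)

lemma vars_in_lin_subst:
  assumes "vars_in m g"
  shows "vars_in n (lin_subst n A g)"
proof -
  have "lin_subst n A g = psubst (\<lambda>i. \<Sum>k<n. Const (A i k) * Var k) Const g"
    by (simp add: lin_subst_def psubst_def mon_val_def)
  also have "vars_in n \<dots>"
    using assms by (intro vars_in_psubst[of m] vars_in_sum vars_in_mult vars_in_Const vars_in_Var) auto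
  finally show ?thesis .
qed

lemma pdeg_le_iff: "pdeg p \<le> d \<longleftrightarrow> (\<forall>a\<in>keys p. mdeg a \<le> d)"
  by (simp add: pdeg_def)

lemma pdeg_add_le: "pdeg p \<le> d \<Longrightarrow> pdeg q \<le> d \<Longrightarrow> pdeg (p + q) \<le> d"
  unfolding pdeg_le_iff using keys_add[of p q] by blast

lemma pdeg_mult_le: "pdeg p \<le> d \<Longrightarrow> pdeg q \<le> e \<Longrightarrow> pdeg (p * q) \<le> d + e"
  unfolding pdeg_le_iff using keys_mult[of p q] by (force simp: mdeg_add intro: add_mono)

lemma pdeg_0 [simp]: "pdeg 0 = 0"
  by (simp add: pdeg_def)

lemma pdeg_1 [simp]: "pdeg 1 = 0"
  by (simp add: pdeg_def)

lemma pdeg_Const [simp]: "pdeg (Const c) = 0"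
  by (simp add: pdeg_def Const_def)

lemma pdeg_Var_le: "pdeg (Var i) \<le> 1"
  by (simp add: pdeg_le_iff Var_def)

lemma pdeg_uminus [simp]: "pdeg (- p) = pdeg p"
  by (simp add: pdeg_def keys_minus)

lemma pdeg_sum_le: "(\<And>a. a \<in> A \<Longrightarrow> pdeg (p a) \<le> d) \<Longrightarrow> pdeg (\<Sum>a\<in>A. p a) \<le> d"
  by (induction A rule: infinite_finite_induct) (simp_all add: pdeg_add_le)

lemma pdeg_prod_le:
  "(\<And>a. a \<in> A \<Longrightarrow> pdeg (p a) \<le> d a) \<Longrightarrow> pdeg (\<Prod>a\<in>A. p a) \<le> (\<Sum>a\<in>A. d a)"
  by (induction A rule: infinite_finite_induct) (simp_all add: pdeg_mult_le)

lemma pdeg_power_le: "pdeg p \<le> d \<Longrightarrow> pdeg (p ^ k) \<le> k * d"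
  by (induction k) (simp_all add: pdeg_mult_le)

lemma pdeg_subset_le: "pdeg p \<le> d \<Longrightarrow> keys q \<subseteq> keys p \<Longrightarrow> pdeg q \<le> d"
  unfolding pdeg_le_iff by blast

lemma pdeg_psubst_le:
  assumes "pdeg p \<le> d" "\<And>i. pdeg (F i) \<le> 1"
  shows "pdeg (psubst F Const p) \<le> d"
  unfolding psubst_def
proof (intro pdeg_sum_le)
  fix a assume a: "a \<in> keys p"
  have "pdeg (Const (lookup p a) * mon_val F a) \<le> 0 + mdeg a"
    unfolding mon_val_def mdeg_def
    by (intro pdeg_mult_le pdeg_prod_le) (simp_all add: pdeg_power_le[OF assms(2), simplified])
  then show "pdeg (Const (lookup p a) * mon_val F a) \<le> d"
    using assms(1) a by (fastforce simp: pdeg_le_iff)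
qed

lemma keys_subset_Nk: "vars_in n q \<Longrightarrow> pdeg q \<le> k \<Longrightarrow> keys q \<subseteq> Nk n k"
  by (auto simp: vars_in_def pdeg_le_iff Nk_def)

lemma pd_single: "pd i (single a c) = single (a - single i 1) (c * of_nat (lookup a i))"
  by (cases "c = 0") (simp_all add: pd_def)

lemma lookup_pd: "lookup (pd i p) b = lookup p (b + single i 1) * of_nat (lookup b i + 1)"
proof -
  have "lookup (pd i p) b =
      (\<Sum>a\<in>keys p. if a = b + single i 1 then lookup p a * of_nat (lookup b i + 1) else 0)"
    unfolding pd_def lookup_sum
  proof (intro sum.cong refl)
    fix a
    show "lookup (single (a - single i 1) (lookup p a * of_nat (lookup a i))) b =
      (if a = b + single i 1 then lookup p a * of_nat (lookup b i + 1) else 0)"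
    proof (cases "i \<in> keys a")
      case False
      then have "a \<noteq> b + single i 1" by (auto simp: lookup_add in_keys_iff)
      with False show ?thesis by (simp add: lookup_single in_keys_iff)
    next
      case True
      then show ?thesis using mon_minus_single_eq_iff[OF True, of b]
        by (auto simp: lookup_single when_def lookup_add)
    qed
  qed
  also have "\<dots> = lookup p (b + single i 1) * of_nat (lookup b i + 1)"
    by (auto simp: in_keys_iff)
  finally show ?thesis .
qed

lemma pd_add: "pd i (p + q) = pd i p + pd i q"
  by (intro poly_mapping_eqI) (simp add: lookup_pd lookup_add distrib_right)

lemma pd_0 [simp]: "pd i 0 = 0"
  by (simp add: pd_def)

lemma pd_sum: "pd i (\<Sum>a\<in>A. p a) = (\<Sum>a\<in>A. pd i (p a))"
  by (induction A rule: infinite_finite_induct) (simp_all add: pd_add)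

lemma pd_Const_mult: "pd i (Const c * p) = Const c * pd i p"
  by (intro poly_mapping_eqI) (simp add: lookup_pd lookup_Const_mult)

lemma pd_Const [simp]: "pd i (Const c) = 0"
  by (simp add: Const_def pd_single)

lemma pd_1 [simp]: "pd i 1 = 0"
  using pd_Const[of i 1] by simp

lemma pd_Var: "pd i (Var j) = (if i = j then 1 else 0)"
  by (simp add: Var_def pd_single lookup_single when_def)

lemma pd_mult_single:
  "pd i (single a c * single b d) = pd i (single a c) * single b d + single a c * pd i (single b d)"
proof -
  have left: "single (a + b - single i 1) (c * d * of_nat (lookup a i)) =
      single (a - single i 1 + b) (c * of_nat (lookup a i) * d)"
  proof (cases "lookup a i = 0")
    case False
    then have "a + b - single i 1 = a - single i 1 + b"
      by (intro poly_mapping_eqI) (auto simp add: lookup_add lookup_minus lookup_single when_def)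
    then show ?thesis by (simp add: mult_ac)
  qed simp
  have right: "single (a + b - single i 1) (c * d * of_nat (lookup b i)) =
      single (a + (b - single i 1)) (c * (d * of_nat (lookup b i)))"
  proof (cases "lookup b i = 0")
    case False
    then have "a + b - single i 1 = a + (b - single i 1)"
      by (intro poly_mapping_eqI) (auto simp add: lookup_add lookup_minus lookup_single when_def)
    then show ?thesis by (simp add: mult_ac)
  qed simp
  have "pd i (single a c * single b d) =
      single (a + b - single i 1) (c * d * of_nat (lookup a i)) +
      single (a + b - single i 1) (c * d * of_nat (lookup b i))"
    by (simp add: mult_single pd_single lookup_add single_add[symmetric] distrib_left)
  also have "\<dots> = pd i (single a c) * single b d + single a c * pd i (single b d)"
    by (simp only: left right) (simp add: pd_single mult_single)
  finally show ?thesis .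
qed

lemma pd_mult: "pd i (p * q) = pd i p * q + p * pd i q"
proof -
  let ?P = "\<lambda>a. single a (lookup p a)" and ?Q = "\<lambda>b. single b (lookup q b)"
  have P: "p = (\<Sum>a\<in>keys p. ?P a)" and Q: "q = (\<Sum>b\<in>keys q. ?Q b)"
    by (simp_all add: poly_mapping_sum_single)
  have "pd i (p * q) = (\<Sum>a\<in>keys p. \<Sum>b\<in>keys q. pd i (?P a * ?Q b))"
    by (subst P, subst Q) (simp add: sum_product pd_sum)
  also have "\<dots> = (\<Sum>a\<in>keys p. \<Sum>b\<in>keys q. pd i (?P a) * ?Q b) + (\<Sum>a\<in>keys p. \<Sum>b\<in>keys q. ?P a * pd i (?Q b))"
    by (simp add: pd_mult_single sum.distrib)
  also have "\<dots> = pd i p * q + p * pd i q"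
    by (subst (3 4) P, subst (3 4) Q) (simp add: sum_product pd_sum)
  finally show ?thesis .
qed

definition shift :: "(nat \<Rightarrow> real) \<Rightarrow> mpoly \<Rightarrow> mpoly" where
  "shift c p = psubst (\<lambda>j. Var j + Const (c j)) Const p"

lemma shift_add: "shift c (p + q) = shift c p + shift c q"
  by (simp add: shift_def psubst_add is_ring_hom_Const)

lemma shift_mult: "shift c (p * q) = shift c p * shift c q"
  by (simp add: shift_def psubst_mult is_ring_hom_Const)

lemma shift_sum: "shift c (\<Sum>a\<in>A. p a) = (\<Sum>a\<in>A. shift c (p a))"
  by (simp add: shift_def psubst_sum is_ring_hom_Const)

lemma shift_Const [simp]: "shift c (Const a) = Const a"
  by (simp add: shift_def psubst_Const is_ring_hom_Const)

lemma shift_1 [simp]: "shift c 1 = 1"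
  by (simp add: shift_def psubst_one is_ring_hom_Const)

lemma shift_0 [simp]: "shift c 0 = 0"
  by (simp add: shift_def)

lemma shift_Var: "shift c (Var j) = Var j + Const (c j)"
  by (simp add: shift_def psubst_Var is_ring_hom_Const)

lemma shift_shift_uminus: "shift (\<lambda>j. - c j) (shift c p) = p"
proof -
  have "shift (\<lambda>j. - c j) (shift c p) = psubst (\<lambda>j. shift (\<lambda>j. - c j) (Var j + Const (c j))) Const p"
    unfolding shift_def by (rule psubst_psubst[OF is_ring_hom_Const])
  also have "(\<lambda>j. shift (\<lambda>j. - c j) (Var j + Const (c j))) = Var"
    by (rule ext) (simp add: shift_add shift_Var Const_add[symmetric])
  finally show ?thesis by (simp add: psubst_Var_Const)
qed

lemma pd_shift_single: "pd i (shift c (single a 1)) = shift c (pd i (single a 1))"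
proof (induction a rule: mon_induct)
  case (add_single a j)
  have s: "single (a + single j 1) (1::real) = single a 1 * Var j"
    by (simp add: Var_def mult_single)
  have v: "shift c (pd i (Var j)) = pd i (Var j)"
    by (simp add: pd_Var)
  have "pd i (shift c (single (a + single j 1) 1)) = pd i (shift c (single a 1) * shift c (Var j))"
    by (simp only: s shift_mult)
  also have "\<dots> = shift c (pd i (single a 1)) * shift c (Var j) + shift c (single a 1) * pd i (Var j)"
    by (simp add: pd_mult add_single shift_Var pd_add)
  also have "\<dots> = shift c (pd i (single (a + single j 1) 1))"
    by (simp only: s pd_mult shift_add shift_mult v)
  finally show ?case .
qed simp

lemma pd_shift: "pd i (shift c p) = shift c (pd i p)"
proof -
  have "pd i (shift c p) = (\<Sum>a\<in>keys p. Const (lookup p a) * pd i (shift c (single a 1)))"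
    by (subst sum_Const_mult_single[symmetric]) (simp add: shift_sum shift_mult pd_sum pd_Const_mult)
  also have "\<dots> = shift c (pd i p)"
    by (subst (2) sum_Const_mult_single[symmetric])
       (simp add: pd_shift_single shift_sum shift_mult pd_sum pd_Const_mult)
  finally show ?thesis .
qed

lemma vars_in_shift: "vars_in n p \<Longrightarrow> vars_in n (shift c p)"
  unfolding shift_def by (rule vars_in_psubst) (auto intro: vars_in_add vars_in_Var)

lemma pdeg_shift_le: "pdeg p \<le> d \<Longrightarrow> pdeg (shift c p) \<le> d"
  unfolding shift_def by (rule pdeg_psubst_le, assumption, rule pdeg_add_le[OF pdeg_Var_le]) simp

lemma peval_shift: "peval (shift c p) x = peval p (\<lambda>j. x j + c j)"
  unfolding peval_eq_psubst shift_def
  by (simp add: psubst_psubst is_ring_hom_id psubst_add psubst_Var psubst_Const)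

definition riesz :: "(mon \<Rightarrow> real) \<Rightarrow> mpoly \<Rightarrow> real" where
  "riesz y p = (\<Sum>a\<in>keys p. lookup p a * y a)"

lemma riesz_superset: "finite A \<Longrightarrow> keys p \<subseteq> A \<Longrightarrow> riesz y p = (\<Sum>a\<in>A. lookup p a * y a)"
  unfolding riesz_def by (rule sum.mono_neutral_left) (auto simp: in_keys_iff)

lemma riesz_add: "riesz y (p + q) = riesz y p + riesz y q"
proof -
  let ?A = "keys p \<union> keys q"
  have "riesz y (p + q) = (\<Sum>a\<in>?A. lookup (p + q) a * y a)"
    using keys_add[of p q] by (intro riesz_superset) auto
  also have "\<dots> = (\<Sum>a\<in>?A. lookup p a * y a) + (\<Sum>a\<in>?A. lookup q a * y a)"
    by (simp add: lookup_add distrib_right sum.distrib)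
  also have "\<dots> = riesz y p + riesz y q"
    using riesz_superset[of ?A p y] riesz_superset[of ?A q y] by auto
  finally show ?thesis .
qed

lemma riesz_0 [simp]: "riesz y 0 = 0"
  by (simp add: riesz_def)

lemma riesz_sum: "riesz y (\<Sum>a\<in>A. p a) = (\<Sum>a\<in>A. riesz y (p a))"
  by (induction A rule: infinite_finite_induct) (simp_all add: riesz_add)

lemma riesz_single: "riesz y (single a c) = c * y a"
  by (cases "c = 0") (simp_all add: riesz_def)

lemma riesz_1: "riesz y 1 = y 0"
  using riesz_single[of y 0 1] by simp

lemma riesz_Const: "riesz y (Const c) = c * y 0"
  by (simp add: Const_def riesz_single)

lemma riesz_Var: "riesz y (Var i) = y (single i 1)"
  by (simp add: Var_def riesz_single)

lemma riesz_uminus: "riesz y (- p) = - riesz y p"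
  using riesz_add[of y p "- p"] by (simp add: add_eq_0_iff)

lemma riesz_Const_mult: "riesz y (Const c * p) = c * riesz y p"
proof -
  have "keys (Const c * p) \<subseteq> keys p"
    by (auto simp: in_keys_iff lookup_Const_mult)
  then have "riesz y (Const c * p) = (\<Sum>a\<in>keys p. lookup (Const c * p) a * y a)"
    by (intro riesz_superset) auto
  then show ?thesis
    by (simp only: riesz_def[of y p] lookup_Const_mult sum_distrib_left mult.assoc)
qed

lemma riesz_mult:
  assumes "finite A" "keys p \<subseteq> A" "finite B" "keys q \<subseteq> B"
  shows "riesz y (p * q) = (\<Sum>a\<in>A. \<Sum>b\<in>B. lookup p a * lookup q b * y (a + b))"
  by (simp add: mult_eq_sum_single[OF assms] riesz_sum riesz_single)

lemma riesz_shift: "riesz y (shift c p) = riesz (\<lambda>a. riesz y (shift c (single a 1))) p"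
proof -
  have "riesz y (shift c p) = (\<Sum>a\<in>keys p. lookup p a * riesz y (shift c (single a 1)))"
    by (subst sum_Const_mult_single[symmetric]) (simp add: shift_sum shift_mult riesz_sum riesz_Const_mult)
  then show ?thesis by (simp add: riesz_def)
qed

definition hess_form :: "nat \<Rightarrow> mpoly \<Rightarrow> mpoly" where
  "hess_form n G = (\<Sum>j<n. Var j * (\<Sum>i<n. Var i * pd i (pd j G)))"

lemma lookup_Var_mult:
  "lookup (Var j * r) a = (if j \<in> keys a then lookup r (a - single j 1) else 0)"
proof -
  have "Var j * r = (\<Sum>b\<in>keys r. single (single j 1 + b) (lookup r b))"
    by (subst (1) poly_mapping_sum_single[of "keys r" r, symmetric])
       (auto simp: sum_distrib_left Var_def mult_single)
  then have e: "lookup (Var j * r) a = (\<Sum>b\<in>keys r. if single j 1 + b = a then lookup r b else 0)"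
    by (simp add: lookup_sum lookup_single when_def)
  show ?thesis
  proof (cases "j \<in> keys a")
    case False
    then have "\<And>b. single j 1 + b \<noteq> a" by (auto simp: lookup_add in_keys_iff)
    then show ?thesis using e False by simp
  next
    case True
    have "\<And>b. single j 1 + b = a \<longleftrightarrow> b = a - single j 1"
      using mon_minus_single_eq_iff[OF True] by (metis add.commute)
    then show ?thesis using e True by (simp add: in_keys_iff)
  qed
qed

lemma lookup_Var_mult_pd: "lookup (Var i * pd i q) b = of_nat (lookup b i) * lookup q b"
proof (cases "i \<in> keys b")
  case True
  then have "lookup (b - single i 1) i + 1 = lookup b i"
    by (simp add: lookup_minus in_keys_iff)
  then show ?thesis using True mon_minus_single_add[OF True]
    by (simp add: lookup_Var_mult lookup_pd mult.commute)
qed (simp add: lookup_Var_mult in_keys_iff)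

lemma lookup_sum_Var_mult_pd:
  assumes "keys b \<subseteq> {..<n}"
  shows "lookup (\<Sum>i<n. Var i * pd i q) b = of_nat (mdeg b) * lookup q b"
  using mdeg_superset[of "{..<n}" b] assms
  by (simp add: lookup_sum lookup_Var_mult_pd sum_distrib_right[symmetric])

lemma lookup_hess_form:
  assumes "keys a \<subseteq> {..<n}"
  shows "lookup (hess_form n G) a = of_nat (mdeg a) * (of_nat (mdeg a) - 1) * lookup G a"
proof -
  have summand: "lookup (Var j * (\<Sum>i<n. Var i * pd i (pd j G))) a
      = (of_nat (mdeg a) - 1) * of_nat (lookup a j) * lookup G a" for j
  proof (cases "j \<in> keys a")
    case True
    let ?b = "a - single j 1"
    have "keys ?b \<subseteq> keys a" by (auto simp: in_keys_iff lookup_minus)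
    then have "keys ?b \<subseteq> {..<n}" using assms by blast
    then have "lookup (Var j * (\<Sum>i<n. Var i * pd i (pd j G))) a = of_nat (mdeg ?b) * lookup (pd j G) ?b"
      using True by (simp add: lookup_Var_mult lookup_sum_Var_mult_pd)
    also have "\<dots> = of_nat (mdeg ?b) * (lookup G a * of_nat (lookup a j))"
      using True mon_minus_single_add[OF True] by (simp add: lookup_pd lookup_minus in_keys_iff)
    also have "of_nat (mdeg ?b) = (of_nat (mdeg a) - 1 :: real)"
      using mdeg_minus_single[OF True] by (simp flip: of_nat_Suc)
    finally show ?thesis by (simp add: mult_ac)
  qed (simp add: lookup_Var_mult in_keys_iff)
  have "lookup (hess_form n G) a = (\<Sum>j<n. (of_nat (mdeg a) - 1) * of_nat (lookup a j) * lookup G a)"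
    by (simp add: hess_form_def lookup_sum summand)
  also have "\<dots> = (of_nat (mdeg a) - 1) * of_nat (\<Sum>j<n. lookup a j) * lookup G a"
    by (simp add: sum_distrib_left sum_distrib_right)
  also have "(\<Sum>j<n. lookup a j) = mdeg a"
    using mdeg_superset[of "{..<n}" a] assms by simp
  finally show ?thesis by (simp add: mult_ac)
qed

lemma hess_form_eq_sum_squares:
  assumes "\<And>i j. i < n \<Longrightarrow> j < n \<Longrightarrow> pd i (pd j G) = (\<Sum>a<l. Q a i * Q a j)"
  shows "hess_form n G = (\<Sum>a<l. (\<Sum>i<n. Var i * Q a i) * (\<Sum>i<n. Var i * Q a i))"
proof -
  have "(\<Sum>a<l. (\<Sum>i<n. Var i * Q a i) * (\<Sum>j<n. Var j * Q a j))
      = (\<Sum>a<l. \<Sum>i<n. \<Sum>j<n. (Var i * Q a i) * (Var j * Q a j))"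
    by (simp only: sum_product)
  also have "\<dots> = (\<Sum>i<n. \<Sum>j<n. \<Sum>a<l. (Var i * Q a i) * (Var j * Q a j))"
    by (subst sum.swap) (simp only: sum.swap[of _ "{..<l}"])
  also have "\<dots> = (\<Sum>i<n. \<Sum>j<n. Var j * (Var i * pd i (pd j G)))"
    using assms by (intro sum.cong refl) (simp add: sum_distrib_left ac_simps)
  also have "\<dots> = hess_form n G"
    by (subst sum.swap) (simp only: hess_form_def sum_distrib_left)
  finally show ?thesis by simp
qed

section \<open>Degrees in a sum of squares\<close>

text \<open>No cancellation can occur at \<open>\<mu> + \<mu>\<close> when \<open>\<mu>\<close> is the lexicographically largest monomial
  of maximal total degree.\<close>

lemma add_eq_double_max:
  fixes b c \<mu> :: "'a::ordered_cancel_ab_semigroup_add"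
  assumes "b \<le> \<mu>" "c \<le> \<mu>" "b + c = \<mu> + \<mu>"
  shows "b = \<mu> \<and> c = \<mu>"
proof (rule ccontr)
  assume "\<not> (b = \<mu> \<and> c = \<mu>)"
  then have "b < \<mu> \<or> c < \<mu>"
    using assms(1,2) by auto
  then have "b + c < \<mu> + \<mu>"
    using add_less_le_mono[of b \<mu> c \<mu>] add_le_less_mono[of b \<mu> c \<mu>] assms(1,2) by blast
  then show False
    using assms(3) by simp
qed

lemma obtain_mon_unique_double:
  fixes T :: "mon set"
  assumes "finite T" "T \<noteq> {}"
  obtains \<mu> where "\<mu> \<in> T" "\<And>b. b \<in> T \<Longrightarrow> mdeg b \<le> mdeg \<mu>"
    "\<And>b c. b \<in> T \<Longrightarrow> c \<in> T \<Longrightarrow> b + c = \<mu> + \<mu> \<Longrightarrow> b = \<mu> \<and> c = \<mu>"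
proof -
  define D where "D = Max (mdeg ` T)"
  define TD where "TD = {b \<in> T. mdeg b = D}"
  have le_D: "mdeg b \<le> D" if "b \<in> T" for b
    using assms that by (simp add: D_def)
  have "D \<in> mdeg ` T"
    unfolding D_def using assms by (intro Max_in) auto
  then have "finite TD" "TD \<noteq> {}"
    using assms by (auto simp: TD_def)
  define \<mu> where "\<mu> = Max TD"
  have "\<mu> \<in> TD"
    using \<open>finite TD\<close> \<open>TD \<noteq> {}\<close> by (simp add: \<mu>_def)
  then have \<mu>: "\<mu> \<in> T" "mdeg \<mu> = D"
    by (auto simp: TD_def)
  have unique: "b = \<mu> \<and> c = \<mu>" if "b \<in> T" "c \<in> T" "b + c = \<mu> + \<mu>" for b c
  proof -
    have "mdeg b + mdeg c = D + D"
      using that(3) \<mu>(2) by (metis mdeg_add)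
    then have "b \<in> TD" "c \<in> TD"
      using le_D[OF that(1)] le_D[OF that(2)] that(1,2) by (auto simp: TD_def)
    then have "b \<le> \<mu>" "c \<le> \<mu>"
      using \<open>finite TD\<close> by (simp_all add: \<mu>_def)
    then show ?thesis
      using that(3) by (rule add_eq_double_max)
  qed
  show ?thesis
    using le_D \<mu>(2) by (intro that[OF \<mu>(1) _ unique]) auto
qed

lemma lookup_sum_squares_at_unique_double:
  assumes "finite T" "\<And>a. a \<in> A \<Longrightarrow> keys (w a) \<subseteq> T" "\<mu> \<in> T"
    and unique: "\<And>b c. b \<in> T \<Longrightarrow> c \<in> T \<Longrightarrow> b + c = \<mu> + \<mu> \<Longrightarrow> b = \<mu> \<and> c = \<mu>"
  shows "lookup (\<Sum>a\<in>A. w a * w a) (\<mu> + \<mu>) = (\<Sum>a\<in>A. lookup (w a) \<mu> * lookup (w a) \<mu>)"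
proof -
  have "lookup (w a * w a) (\<mu> + \<mu>) = lookup (w a) \<mu> * lookup (w a) \<mu>" if "a \<in> A" for a
  proof -
    have "lookup (w a * w a) (\<mu> + \<mu>) =
        (\<Sum>b\<in>T. \<Sum>c\<in>T. if b + c = \<mu> + \<mu> then lookup (w a) b * lookup (w a) c else 0)"
      using assms(1,2) that by (intro lookup_mult_eq_sum) auto
    also have "\<dots> = (\<Sum>b\<in>T. \<Sum>c\<in>T. if b = \<mu> \<and> c = \<mu> then lookup (w a) b * lookup (w a) c else 0)"
    proof (intro sum.cong refl)
      fix b c assume "b \<in> T" "c \<in> T"
      then have "b + c = \<mu> + \<mu> \<longleftrightarrow> b = \<mu> \<and> c = \<mu>" using unique by blast
      then show "(if b + c = \<mu> + \<mu> then lookup (w a) b * lookup (w a) c else 0) =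
          (if b = \<mu> \<and> c = \<mu> then lookup (w a) b * lookup (w a) c else 0)"
        by (simp only:)
    qed
    also have "\<dots> = lookup (w a) \<mu> * lookup (w a) \<mu>"
    proof -
      have "(\<Sum>c\<in>T. if b = \<mu> \<and> c = \<mu> then lookup (w a) b * lookup (w a) c else 0)
          = (if b = \<mu> then lookup (w a) \<mu> * lookup (w a) \<mu> else 0)" for b
        using assms(1,3) by (cases "b = \<mu>") (simp_all add: sum.delta)
      then show ?thesis using assms(1,3) by (simp add: sum.delta)
    qed
    finally show ?thesis .
  qed
  then show ?thesis by (simp add: lookup_sum)
qed

lemma pdeg_le_of_sum_squares:
  fixes w :: "'i \<Rightarrow> mpoly"
  assumes "finite A" "pdeg (\<Sum>a\<in>A. w a * w a) \<le> 2 * k" "a \<in> A"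
  shows "pdeg (w a) \<le> k"
proof (rule ccontr)
  assume "\<not> pdeg (w a) \<le> k"
  then obtain b where b: "b \<in> keys (w a)" "k < mdeg b"
    by (auto simp: pdeg_le_iff not_le)
  define T where "T = (\<Union>a\<in>A. keys (w a))"
  have "finite T"
    using assms(1) by (simp add: T_def)
  moreover have "T \<noteq> {}"
    using assms(3) b(1) unfolding T_def by blast
  ultimately obtain \<mu> where \<mu>: "\<mu> \<in> T" "\<And>b. b \<in> T \<Longrightarrow> mdeg b \<le> mdeg \<mu>"
    and unique: "\<And>b c. b \<in> T \<Longrightarrow> c \<in> T \<Longrightarrow> b + c = \<mu> + \<mu> \<Longrightarrow> b = \<mu> \<and> c = \<mu>"
    by (rule obtain_mon_unique_double) blast
  have "k < mdeg \<mu>"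
    using \<mu>(2)[of b] b assms(3) by (force simp: T_def)
  obtain a' where "a' \<in> A" "\<mu> \<in> keys (w a')"
    using \<mu>(1) by (auto simp: T_def)
  then have "0 < (\<Sum>a\<in>A. lookup (w a) \<mu> * lookup (w a) \<mu>)"
    using assms(1) by (intro sum_pos2[of A a']) (auto simp: in_keys_iff zero_less_mult_iff linorder_neq_iff)
  also have "\<dots> = lookup (\<Sum>a\<in>A. w a * w a) (\<mu> + \<mu>)"
    using \<open>finite T\<close> \<mu>(1) unique
    by (intro lookup_sum_squares_at_unique_double[symmetric]) (auto simp: T_def)
  finally have "\<mu> + \<mu> \<in> keys (\<Sum>a\<in>A. w a * w a)"
    by (simp add: in_keys_iff)
  then have "mdeg (\<mu> + \<mu>) \<le> 2 * k"
    using assms(2) by (simp add: pdeg_le_iff)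
  then show False
    using \<open>k < mdeg \<mu>\<close> by (simp add: mdeg_add)
qed

section \<open>Jensen's inequality for sos-convex polynomials\<close>

lemma has_integral_one_minus_mult_power:
  "((\<lambda>s. (1 - s) * s ^ p) has_integral 1 / ((real p + 1) * (real p + 2))) {0..1::real}"
proof -
  define F where "F = (\<lambda>s::real. s ^ (p + 1) / (real p + 1) - s ^ (p + 2) / (real p + 2))"
  have "((\<lambda>s. (1 - s) * s ^ p) has_integral F 1 - F 0) {0..1::real}"
  proof (rule fundamental_theorem_of_calculus)
    fix x :: real
    have "(F has_real_derivative (real (p + 1) * x ^ p / (real p + 1)
        - real (p + 2) * x ^ (p + 1) / (real p + 2))) (at x)"
      unfolding F_def using DERIV_pow[of "p + 1" x] DERIV_pow[of "p + 2" x]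
      by (intro DERIV_diff DERIV_cdivide) simp_all
    moreover have "real (p + 1) * x ^ p / (real p + 1) - real (p + 2) * x ^ (p + 1) / (real p + 2)
        = (1 - x) * x ^ p"
    proof -
      have "real (p + 1) * x ^ p / (real p + 1) = x ^ p" "real (p + 2) * x ^ (p + 1) / (real p + 2) = x * x ^ p"
        by (simp_all add: add.commute)
      then show ?thesis by (simp add: algebra_simps)
    qed
    ultimately show "(F has_vector_derivative (1 - x) * x ^ p) (at x within {0..1})"
      by (simp add: has_real_derivative_iff_has_vector_derivative has_vector_derivative_at_within)
  qed simp
  also have "F 1 - F 0 = 1 / ((real p + 1) * (real p + 2))"
    by (simp add: F_def field_simps)
  finally show ?thesis .
qed

text \<open>Moments rescaled so that \<open>riesz (hess_moment m) (hess_form n G)\<close> recovers the terms of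
  \<open>riesz m G\<close> of degree at least two.  For \<open>mdeg a \<le> 1\<close> the denominator vanishes and the
  value is \<open>0\<close>.\<close>

definition hess_moment :: "(mon \<Rightarrow> real) \<Rightarrow> mon \<Rightarrow> real" where
  "hess_moment m a = m a / (real (mdeg a) * (real (mdeg a) - 1))"

text \<open>The double sum is \<open>L(w\<^sub>s\<^sup>2)\<close> for \<open>w\<^sub>s(x) = w(s x) / s\<close>.\<close>

lemma riesz_rescaled_square_nonneg:
  assumes psd: "\<And>q. vars_in n q \<Longrightarrow> pdeg q \<le> k \<Longrightarrow> 0 \<le> riesz m (q * q)"
    and w: "vars_in n w" "pdeg w \<le> k" and pos: "\<And>b. b \<in> keys w \<Longrightarrow> 1 \<le> mdeg b"
  shows "0 \<le> (\<Sum>b\<in>keys w. \<Sum>c\<in>keys w.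
                lookup w b * lookup w c * m (b + c) * s ^ (mdeg b + mdeg c - 2))"
proof -
  define ws where "ws = (\<Sum>b\<in>keys w. single b (lookup w b * s ^ (mdeg b - 1)))"
  have keys_ws: "keys ws \<subseteq> keys w"
    unfolding ws_def using keys_sum[of "\<lambda>b. single b (lookup w b * s ^ (mdeg b - 1))" "keys w"] by auto
  have lookup_ws: "lookup ws b = lookup w b * s ^ (mdeg b - 1)" if "b \<in> keys w" for b
    using that by (simp add: ws_def lookup_sum_single)
  have "0 \<le> riesz m (ws * ws)"
    using keys_ws by (intro psd vars_in_subset[OF w(1)] pdeg_subset_le[OF w(2)])
  also have "\<dots> = (\<Sum>b\<in>keys w. \<Sum>c\<in>keys w. lookup ws b * lookup ws c * m (b + c))"
    using keys_ws by (intro riesz_mult) auto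
  also have "\<dots> = (\<Sum>b\<in>keys w. \<Sum>c\<in>keys w.
                    lookup w b * lookup w c * m (b + c) * s ^ (mdeg b + mdeg c - 2))"
  proof (intro sum.cong refl)
    fix b c assume bc: "b \<in> keys w" "c \<in> keys w"
    then have "mdeg b - 1 + (mdeg c - 1) = mdeg b + mdeg c - 2"
      using pos[of b] pos[of c] by simp
    then have "s ^ (mdeg b - 1) * s ^ (mdeg c - 1) = s ^ (mdeg b + mdeg c - 2)"
      by (metis power_add)
    then show "lookup ws b * lookup ws c * m (b + c) =
        lookup w b * lookup w c * m (b + c) * s ^ (mdeg b + mdeg c - 2)"
      using bc by (simp add: lookup_ws mult_ac)
  qed
  finally show ?thesis .
qed

lemma riesz_hess_moment_square_nonneg:
  assumes psd: "\<And>q. vars_in n q \<Longrightarrow> pdeg q \<le> k \<Longrightarrow> 0 \<le> riesz m (q * q)"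
    and w: "vars_in n w" "pdeg w \<le> k" and pos: "\<And>b. b \<in> keys w \<Longrightarrow> 1 \<le> mdeg b"
  shows "0 \<le> riesz (hess_moment m) (w * w)"
proof -
  define K where "K = keys w"
  define P where "P = (\<lambda>b c. mdeg b + mdeg c - 2)"
  define Kc where "Kc = (\<lambda>b c. lookup w b * lookup w c * m (b + c))"
  have "riesz (hess_moment m) (w * w) =
      (\<Sum>b\<in>K. \<Sum>c\<in>K. lookup w b * lookup w c * hess_moment m (b + c))"
    by (intro riesz_mult) (auto simp: K_def)
  also have "\<dots> = (\<Sum>b\<in>K. \<Sum>c\<in>K. Kc b c * (1 / ((real (P b c) + 1) * (real (P b c) + 2))))"
  proof (intro sum.cong refl)
    fix b c assume "b \<in> K" "c \<in> K"
    then have "1 \<le> mdeg b" "1 \<le> mdeg c" using pos by (auto simp: K_def)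
    then have "real (P b c) + 1 = real (mdeg (b + c)) - 1" "real (P b c) + 2 = real (mdeg (b + c))"
      by (auto simp: P_def mdeg_add of_nat_diff)
    then show "lookup w b * lookup w c * hess_moment m (b + c) =
        Kc b c * (1 / ((real (P b c) + 1) * (real (P b c) + 2)))"
      by (simp add: Kc_def hess_moment_def mult_ac)
  qed
  finally have eq: "riesz (hess_moment m) (w * w) =
      (\<Sum>b\<in>K. \<Sum>c\<in>K. Kc b c * (1 / ((real (P b c) + 1) * (real (P b c) + 2))))" .
  have "((\<lambda>s. \<Sum>b\<in>K. \<Sum>c\<in>K. Kc b c * ((1 - s) * s ^ P b c)) has_integral riesz (hess_moment m) (w * w)) {0..1}"
    unfolding eq K_def
    by (intro has_integral_sum finite_keys has_integral_mult_right has_integral_one_minus_mult_power)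
  moreover have "0 \<le> (\<Sum>b\<in>K. \<Sum>c\<in>K. Kc b c * ((1 - s) * s ^ P b c))" if "s \<in> {0..1}" for s
  proof -
    have "0 \<le> (1 - s) * (\<Sum>b\<in>K. \<Sum>c\<in>K. Kc b c * s ^ P b c)"
      using that riesz_rescaled_square_nonneg[OF psd w pos, of s]
      by (simp add: K_def Kc_def P_def)
    then show ?thesis
      by (simp add: sum_distrib_left mult_ac)
  qed
  ultimately show ?thesis
    by (rule has_integral_nonneg) auto
qed

lemma vars_in_pd: "vars_in n p \<Longrightarrow> vars_in n (pd i p)"
  unfolding vars_in_def
proof (intro ballI)
  fix b assume vars: "\<forall>a\<in>keys p. keys a \<subseteq> {..<n}" and "b \<in> keys (pd i p)"
  then have "b + single i 1 \<in> keys p"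
    by (auto simp: in_keys_iff lookup_pd)
  then show "keys b \<subseteq> {..<n}"
    using vars keys_add_mon[of b "single i 1"] by blast
qed

lemma vars_in_hess_form: "vars_in n G \<Longrightarrow> vars_in n (hess_form n G)"
  unfolding hess_form_def by (intro vars_in_sum vars_in_mult vars_in_Var vars_in_pd) auto

lemma keys_hess_form_subset:
  assumes "vars_in n G"
  shows "keys (hess_form n G) \<subseteq> keys G"
proof
  fix a assume a: "a \<in> keys (hess_form n G)"
  then have "keys a \<subseteq> {..<n}"
    using vars_in_hess_form[OF assms] by (auto simp: vars_in_def)
  then have "lookup G a \<noteq> 0"
    using a lookup_hess_form[of a n G] by (auto simp: in_keys_iff)
  then show "a \<in> keys G" by (simp add: in_keys_iff)
qed

lemma lookup_mult_moment_split:
  assumes "keys a \<subseteq> {..<n}" "m 0 = 1" "\<And>i. i < n \<Longrightarrow> m (single i 1) = 0"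
  shows "lookup G a * m a = (if a = 0 then lookup G a else 0) + lookup (hess_form n G) a * hess_moment m a"
proof -
  note E_a = lookup_hess_form[OF assms(1), of G]
  consider "mdeg a = 0" | "mdeg a = 1" | "2 \<le> mdeg a" by linarith
  then show ?thesis
  proof cases
    case 1
    then have "a = 0" by (simp add: mdeg_eq_0_iff)
    then show ?thesis using assms(2) E_a by simp
  next
    case 2
    then obtain i where "a = single i 1"
      using mdeg_eq_1_iff by blast
    moreover have "a \<noteq> 0"
      using 2 by auto
    ultimately show ?thesis
      using assms(1,3) E_a by auto
  next
    case 3
    then have "a \<noteq> 0" "real (mdeg a) * (real (mdeg a) - 1) \<noteq> 0"
      by auto
    then show ?thesis using E_a by (simp add: hess_moment_def)
  qed
qed

lemma riesz_eq_const_coeff_add_hess_form: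
  assumes m0: "m 0 = 1" and m1: "\<And>i. i < n \<Longrightarrow> m (single i 1) = 0" and G: "vars_in n G"
  shows "riesz m G = lookup G 0 + riesz (hess_moment m) (hess_form n G)"
proof -
  define K where "K = insert 0 (keys G)"
  have keys_E: "keys (hess_form n G) \<subseteq> K"
    using keys_hess_form_subset[OF G] by (auto simp: K_def)
  have summand: "lookup G a * m a = (if a = 0 then lookup G a else 0) +
      lookup (hess_form n G) a * hess_moment m a" if "a \<in> K" for a
    using that G m0 m1 by (intro lookup_mult_moment_split) (auto simp: K_def vars_in_def)
  have "riesz m G = (\<Sum>a\<in>K. lookup G a * m a)"
    by (intro riesz_superset) (auto simp: K_def)
  also have "\<dots> = (\<Sum>a\<in>K. if a = 0 then lookup G a else 0) + (\<Sum>a\<in>K. lookup (hess_form n G) a * hess_moment m a)"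
    by (simp add: summand sum.distrib)
  also have "\<dots> = lookup G 0 + riesz (hess_moment m) (hess_form n G)"
    using riesz_superset[OF _ keys_E] by (simp add: K_def)
  finally show ?thesis .
qed

lemma mdeg_ge_1_of_keys_sum_Var_mult:
  assumes "b \<in> keys (\<Sum>i<n. Var i * Q i)"
  shows "1 \<le> mdeg b"
proof -
  obtain i where "b \<in> keys (Var i * Q i)"
    using subsetD[OF keys_sum assms] by blast
  then obtain c d where "b = c + d" "c \<in> keys (Var i)"
    using subsetD[OF keys_mult] by blast
  then show ?thesis by (simp add: Var_def mdeg_add)
qed

lemma riesz_ge_const_coeff:
  fixes l :: nat
  assumes m0: "m 0 = 1" and m1: "\<And>i. i < n \<Longrightarrow> m (single i 1) = 0"
    and psd: "\<And>q. vars_in n q \<Longrightarrow> pdeg q \<le> k \<Longrightarrow> 0 \<le> riesz m (q * q)"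
    and G: "vars_in n G" "pdeg G \<le> 2 * k"
    and Q: "\<And>a i. a < l \<Longrightarrow> i < n \<Longrightarrow> vars_in n (Q a i)"
    and hess: "\<And>i j. i < n \<Longrightarrow> j < n \<Longrightarrow> pd i (pd j G) = (\<Sum>a<l. Q a i * Q a j)"
  shows "lookup G 0 \<le> riesz m G"
proof -
  define w where "w = (\<lambda>a. \<Sum>i<n. Var i * Q a i)"
  have E: "hess_form n G = (\<Sum>a<l. w a * w a)"
    unfolding w_def by (rule hess_form_eq_sum_squares[OF hess])
  have vars_w: "vars_in n (w a)" if "a < l" for a
    unfolding w_def using that by (intro vars_in_sum vars_in_mult vars_in_Var Q) auto
  have "pdeg (\<Sum>a<l. w a * w a) \<le> 2 * k"
    unfolding E[symmetric] by (rule pdeg_subset_le[OF G(2) keys_hess_form_subset[OF G(1)]])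
  then have deg_w: "pdeg (w a) \<le> k" if "a < l" for a
    using that by (intro pdeg_le_of_sum_squares[of "{..<l}" w k]) simp_all
  have "0 \<le> (\<Sum>a<l. riesz (hess_moment m) (w a * w a))"
  proof (rule sum_nonneg)
    fix a assume "a \<in> {..<l}"
    moreover have "1 \<le> mdeg b" if "b \<in> keys (w a)" for b
      using that unfolding w_def by (rule mdeg_ge_1_of_keys_sum_Var_mult)
    ultimately show "0 \<le> riesz (hess_moment m) (w a * w a)"
      using vars_w deg_w by (intro riesz_hess_moment_square_nonneg[OF psd]) simp_all
  qed
  also have "\<dots> = riesz (hess_moment m) (hess_form n G)"
    by (simp add: E riesz_sum)
  finally show ?thesis
    using riesz_eq_const_coeff_add_hess_form[OF m0 m1 G(1)] by simp
qed

lemma sos_convex_jensen: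
  assumes y0: "y 0 = 1" and yx: "\<And>i. i < n \<Longrightarrow> x i = y (single i 1)"
    and psd: "\<And>q. vars_in n q \<Longrightarrow> pdeg q \<le> k \<Longrightarrow> 0 \<le> riesz y (q * q)"
    and g: "vars_in n g" "pdeg g \<le> 2 * k" "sos_convex n g"
  shows "peval g x \<le> riesz y g"
proof -
  obtain l and P :: "nat \<Rightarrow> nat \<Rightarrow> mpoly" where vars_P: "\<forall>a<l. \<forall>b<n. vars_in n (P a b)"
    and hess: "\<forall>i<n. \<forall>j<n. pd i (pd j g) = (\<Sum>a<l. P a i * P a j)"
    using g(3) unfolding sos_convex_def by blast
  define m where "m = (\<lambda>a. riesz y (shift (\<lambda>j. - x j) (single a 1)))"
  have "lookup (shift x g) 0 \<le> riesz m (shift x g)"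
  proof (rule riesz_ge_const_coeff)
    show "m 0 = 1"
      using y0 by (simp add: m_def riesz_1)
    show "m (single i 1) = 0" if "i < n" for i
    proof -
      have "m (single i 1) = riesz y (Var i + Const (- x i))"
        by (simp only: m_def Var_def[symmetric] shift_Var)
      then show ?thesis
        using yx[OF that] y0 by (simp add: riesz_add riesz_Var riesz_Const)
    qed
    show "0 \<le> riesz m (q * q)" if "vars_in n q" "pdeg q \<le> k" for q
      using psd[OF vars_in_shift[OF that(1)] pdeg_shift_le[OF that(2)]]
      by (simp add: m_def riesz_shift[symmetric] shift_mult)
    show "vars_in n (shift x g)" "pdeg (shift x g) \<le> 2 * k"
      using g by (simp_all add: vars_in_shift pdeg_shift_le)
    show "vars_in n (shift x (P a i))" if "a < l" "i < n" for a i
      using vars_P that by (simp add: vars_in_shift)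
    show "pd i (pd j (shift x g)) = (\<Sum>a<l. shift x (P a i) * shift x (P a j))" if "i < n" "j < n" for i j
      using hess that by (simp add: pd_shift shift_sum shift_mult)
  qed
  moreover have "lookup (shift x g) 0 = peval g x"
    by (simp add: peval_at_zero[symmetric] peval_shift)
  moreover have "riesz m (shift x g) = riesz y g"
    by (simp add: m_def riesz_shift[symmetric] shift_shift_uminus)
  ultimately show ?thesis by simp
qed

section \<open>Localizing matrices\<close>

lemma loc_entry_1: "loc_entry 1 y b c = y (b + c)"
  by (simp add: loc_entry_def)

lemma riesz_square_nonneg_of_loc_psd_1:
  assumes "loc_psd n k 1 y" "vars_in n q" "pdeg q \<le> k"
  shows "0 \<le> riesz y (q * q)"
proof -
  have "0 \<le> (\<Sum>b\<in>Nk n k. \<Sum>c\<in>Nk n k. lookup q b * lookup q c * loc_entry 1 y b c)"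
    using assms(1) by (simp add: loc_psd_def Let_def)
  also have "\<dots> = riesz y (q * q)"
    using keys_subset_Nk[OF assms(2,3)] finite_Nk
    by (simp add: loc_entry_1 riesz_mult[of "Nk n k" q "Nk n k" q y])
  finally show ?thesis .
qed

text \<open>Test the localizing matrix against the unit vector at the monomial \<open>0\<close>.\<close>

lemma riesz_nonneg_of_loc_psd:
  assumes "loc_psd n k f y"
  shows "0 \<le> riesz y f"
proof -
  define N where "N = Nk n (k - (pdeg f + 1) div 2)"
  define v where "v = (\<lambda>b::mon. if b = 0 then 1 else (0::real))"
  have "0 \<in> N" "finite N"
    by (simp_all add: N_def finite_Nk) (simp add: Nk_def)
  have "0 \<le> (\<Sum>b\<in>N. \<Sum>c\<in>N. v b * v c * loc_entry f y b c)"
    using assms by (simp add: loc_psd_def N_def Let_def)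
  also have "\<dots> = (\<Sum>b\<in>N. v b * (\<Sum>c\<in>N. v c * loc_entry f y b c))"
    by (simp add: sum_distrib_left mult.assoc)
  also have "\<dots> = loc_entry f y 0 0"
  proof -
    have delta: "(\<Sum>b\<in>N. v b * F b) = F 0" for F :: "mon \<Rightarrow> real"
    proof -
      have "(\<Sum>b\<in>N. v b * F b) = (\<Sum>b\<in>N. if b = 0 then F b else 0)"
        by (rule sum.cong) (simp_all add: v_def)
      also have "\<dots> = F 0"
        using \<open>0 \<in> N\<close> \<open>finite N\<close> by (simp add: sum.delta)
      finally show ?thesis .
    qed
    show ?thesis by (simp only: delta)
  qed
  also have "\<dots> = riesz y f"
    by (simp add: loc_entry_def riesz_def)
  finally show ?thesis .
qed

text \<open>The localizing matrix of the Dirac moment vector at \<open>x\<close> is \<open>f(x) v v\<^sup>T\<close> with \<open>v = [x]\<^sub>s\<close>.\<close>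

lemma loc_psd_mon_val:
  assumes "0 \<le> peval f x"
  shows "loc_psd n k f (mon_val x)"
  unfolding loc_psd_def Let_def
proof (intro allI)
  fix v :: "mon \<Rightarrow> real"
  let ?N = "Nk n (k - (pdeg f + 1) div 2)"
  have "(\<Sum>b\<in>?N. \<Sum>c\<in>?N. v b * v c * loc_entry f (mon_val x) b c) =
      (\<Sum>b\<in>?N. \<Sum>c\<in>?N. peval f x * ((v b * mon_val x b) * (v c * mon_val x c)))"
    by (simp add: loc_entry_def peval_eq_sum_mon_val mon_val_add sum_distrib_left sum_distrib_right mult_ac)
  also have "\<dots> = peval f x * (\<Sum>b\<in>?N. \<Sum>c\<in>?N. (v b * mon_val x b) * (v c * mon_val x c))"
    by (simp only: sum_distrib_left)
  also have "\<dots> = peval f x * (\<Sum>b\<in>?N. v b * mon_val x b)\<^sup>2"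
    by (simp only: power2_eq_square sum_product)
  finally show "0 \<le> (\<Sum>b\<in>?N. \<Sum>c\<in>?N. v b * v c * loc_entry f (mon_val x) b c)"
    using assms by simp
qed

lemma nonneg_of_loc_psd_sos_concave:
  assumes "y 0 = 1" "\<forall>i<n. x i = y (single i 1)" "loc_psd n k 1 y" "loc_psd n k p y"
    and "vars_in n p" "pdeg p \<le> 2 * k" "sos_concave n p"
  shows "0 \<le> peval p x"
proof -
  have "peval (- p) x \<le> riesz y (- p)"
    using assms riesz_square_nonneg_of_loc_psd_1[OF assms(3)]
    by (intro sos_convex_jensen[of y n x k]) (simp_all add: sos_concave_def)
  then show ?thesis
    using riesz_nonneg_of_loc_psd[OF assms(4)] by (simp add: peval_uminus riesz_uminus)
qed

lemma moment_relaxation_exact: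
  assumes "\<And>p. p \<in> P \<Longrightarrow> vars_in n p \<and> pdeg p \<le> 2 * k \<and> sos_concave n p"
  shows "{x \<in> Rn n. \<exists>y. y 0 = 1 \<and> (\<forall>i<n. x i = y (single i 1)) \<and> loc_psd n k 1 y \<and>
            (\<forall>p\<in>P. loc_psd n k p y)} = {x \<in> Rn n. \<forall>p\<in>P. 0 \<le> peval p x}"
    (is "?S = ?K")
proof (intro equalityI subsetI)
  fix x assume "x \<in> ?S"
  then obtain y where "x \<in> Rn n" and y: "y 0 = 1" "\<forall>i<n. x i = y (single i 1)" "loc_psd n k 1 y"
    and loc: "\<forall>p\<in>P. loc_psd n k p y"
    by blast
  moreover have "0 \<le> peval p x" if "p \<in> P" for p
    using assms[OF that] loc that by (intro nonneg_of_loc_psd_sos_concave[OF y]) auto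
  ultimately show "x \<in> ?K" by blast
next
  fix x assume "x \<in> ?K"
  then have "x \<in> Rn n" "loc_psd n k 1 (mon_val x)" "\<forall>p\<in>P. loc_psd n k p (mon_val x)"
    by (simp_all add: loc_psd_mon_val peval_one)
  moreover have "mon_val x 0 = 1" "\<forall>i<n. x i = mon_val x (single i 1)"
    by simp_all
  ultimately show "x \<in> ?S" by blast
qed

theorem theorem2p7:
  fixes n m r t :: nat
    and f :: "nat \<Rightarrow> mpoly" and g :: "nat \<Rightarrow> mpoly" and h :: "nat \<Rightarrow> mpoly"
    and A :: "nat \<Rightarrow> nat \<Rightarrow> real"
    and C H :: "(nat \<Rightarrow> real) set"
    and d :: nat
    and S :: "nat \<Rightarrow> (nat \<Rightarrow> real) set"
  assumes f_vars: "\<forall>i\<in>{1..r}. vars_in n (f i)"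
    and g_vars: "\<forall>j\<in>{1..t}. vars_in m (g j)"
    and h_def: "\<forall>j\<in>{1..t}. h j = lin_subst n A (g j)"
    and C_def: "C = {x \<in> Rn n. \<forall>i\<in>{1..r}. peval (f i) x \<ge> 0}"
    and H_def: "H = {x \<in> Rn n. \<forall>j\<in>{1..t}. peval (h j) x \<ge> 0}"
    and d_def: "d = Max ({0} \<union> (\<lambda>i. (pdeg (f i) + 1) div 2) ` {1..r}
                             \<union> (\<lambda>j. (pdeg (h j) + 1) div 2) ` {1..t})"
    and S_def: "\<forall>k. S k = {x \<in> Rn n. \<exists>y :: mon \<Rightarrow> real.
                   y 0 = 1 \<and> (\<forall>i<n. x i = y (Poly_Mapping.single i 1)) \<and>
                   loc_psd n k 1 y \<and>
                   (\<forall>i\<in>{1..r}. loc_psd n k (f i) y) \<and>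
                   (\<forall>j\<in>{1..t}. loc_psd n k (h j) y)}"
    and f_conc: "\<forall>i\<in>{1..r}. sos_concave n (f i)"
    and h_conc: "\<forall>j\<in>{1..t}. sos_concave n (h j)"
  shows "\<forall>k\<ge>d. S k = C \<inter> H"
proof (intro allI impI)
  fix k assume "d \<le> k"
  let ?P = "f ` {1..r} \<union> h ` {1..t}"
  have "pdeg p \<le> 2 * k" if "p \<in> ?P" for p
  proof -
    have "(pdeg p + 1) div 2 \<le> d"
      unfolding d_def using that by (intro Max_ge) auto
    then show ?thesis using \<open>d \<le> k\<close> by linarith
  qed
  moreover have "vars_in n p \<and> sos_concave n p" if "p \<in> ?P" for p
    using that f_vars f_conc h_conc h_def g_vars by (auto intro: vars_in_lin_subst)
  ultimately have "{x \<in> Rn n. \<exists>y. y 0 = 1 \<and> (\<forall>i<n. x i = y (single i 1)) \<and> loc_psd n k 1 y \<and>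
      (\<forall>p\<in>?P. loc_psd n k p y)} = {x \<in> Rn n. \<forall>p\<in>?P. 0 \<le> peval p x}"
    by (intro moment_relaxation_exact) blast
  then show "S k = C \<inter> H"
    unfolding S_def[rule_format] C_def H_def by (simp add: ball_Un conj_assoc) blast
qed

end
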